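(* Let $T$ be a continuous linear operator on a real or complex separable infinite-dimensional F-space $X$ and $\mathcal{F}$ a Furstenberg family. If there is an $\mathcal{F}$-recurrent vector $x$ for $T$ such that $\mathcal{C}_T(x)=\{Sx:S\in\mathcal{C}_T\}$ is dense in $X$, then for every $N\in\mathbb{N}$ the set $\mathcal{F}\mathrm{Rec}(T_{(N)})$ contains a dense infinite-dimensional vector subspace of $X^N$. In particular this holds whenever $T$ has a vector that is both $\mathcal{F}$-recurrent and cyclic, or $T$ has an $\mathcal{F}$-hypercyclic vector.
   Context: A Furstenberg family is a collection $\mathcal{F}$ of infinite subsets of $\mathbb{N}_0$, closed under supersets, with $A\cap[n,\infty)\in\mathcal{F}$ whenever $A\in\mathcal{F}$, $n\in\mathbb{N}$. $x$ is $\mathcal{F}$-recurrent if $\{n\geq0:T^nx\in U\}\in\mathcal{F}$ for every neighbourhood $U$ of $x$, and $\mathcal{F}$-hypercyclic if $\{n\geq0:T^nx\in U\}\in\mathcal{F}$ for every non-empty open $U\subset X$; $\mathcal{F}\mathrm{Rec}(\cdot)$ denotes the set of $\mathcal{F}$-recurrent vectors. $\mathcal{C}_T=\{S:X\to X \text{ continuous}:ST=TS\}$. $x$ is cyclic if $\mathrm{span}\{T^nx:n\geq0\}$ is dense. $T_{(N)}=T\oplus\cdots\oplus T$ on $X^N$. *)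

theory Defs
  imports "HOL-Analysis.Analysis"
begin

text \<open>An F-space over 'k: a vector space (w.r.t. scalar multiplication sc) whose topology is induced
 by a complete, translation-invariant metric (the type-class metric of 'a), with continuous
 addition and jointly continuous scalar multiplication.\<close>

definition F_space :: "('k::real_normed_field \<Rightarrow> 'a::{ab_group_add,complete_space} \<Rightarrow> 'a) \<Rightarrow> bool" where
  "F_space sc \<longleftrightarrow> vector_space sc
     \<and> (\<forall>x y z::'a. dist (x + z) (y + z) = dist x y)
     \<and> continuous_on UNIV (\<lambda>p::'a \<times> 'a. fst p + snd p)
     \<and> continuous_on UNIV (\<lambda>p::'k \<times> 'a. sc (fst p) (snd p))"

definition separable_space :: "'a::topological_space itself \<Rightarrow> bool" where
  "separable_space _ \<longleftrightarrow> (\<exists>D::'a set. countable D \<and> closure D = UNIV)"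

definition infinite_dimensional :: "('k::field \<Rightarrow> 'a::ab_group_add \<Rightarrow> 'a) \<Rightarrow> 'a set \<Rightarrow> bool" where
  "infinite_dimensional sc V \<longleftrightarrow> (\<exists>B \<subseteq> V. infinite B \<and> \<not> module.dependent sc B)"

definition furstenberg_family :: "nat set set \<Rightarrow> bool" where
  "furstenberg_family Fam \<longleftrightarrow>
     (\<forall>A\<in>Fam. infinite A)
   \<and> (\<forall>A B. A \<in> Fam \<and> A \<subseteq> B \<longrightarrow> B \<in> Fam)
   \<and> (\<forall>A\<in>Fam. \<forall>n::nat. n \<ge> 1 \<longrightarrow> A \<inter> {n..} \<in> Fam)"

definition F_recurrent :: "nat set set \<Rightarrow> ('a::topological_space \<Rightarrow> 'a) \<Rightarrow> 'a \<Rightarrow> bool" where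
  "F_recurrent Fam T x \<longleftrightarrow> (\<forall>U. open U \<and> x \<in> U \<longrightarrow> {n. (T ^^ n) x \<in> U} \<in> Fam)"

definition F_Rec :: "nat set set \<Rightarrow> ('a::topological_space \<Rightarrow> 'a) \<Rightarrow> 'a set" where
  "F_Rec Fam T = {x. F_recurrent Fam T x}"

definition F_hypercyclic :: "nat set set \<Rightarrow> ('a::topological_space \<Rightarrow> 'a) \<Rightarrow> 'a \<Rightarrow> bool" where
  "F_hypercyclic Fam T x \<longleftrightarrow> (\<forall>U. open U \<and> U \<noteq> {} \<longrightarrow> {n. (T ^^ n) x \<in> U} \<in> Fam)"

text \<open>The commutant C_T: continuous (not necessarily linear) maps commuting with T.\<close>
definition commutant :: "('a::topological_space \<Rightarrow> 'a) \<Rightarrow> ('a \<Rightarrow> 'a) set" where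
  "commutant T = {S. continuous_on UNIV S \<and> S \<circ> T = T \<circ> S}"

definition commutant_orbit :: "('a::topological_space \<Rightarrow> 'a) \<Rightarrow> 'a \<Rightarrow> 'a set" where
  "commutant_orbit T x = {S x | S. S \<in> commutant T}"

definition cyclic_vector :: "('k::field \<Rightarrow> 'a::{ab_group_add,topological_space} \<Rightarrow> 'a) \<Rightarrow> ('a \<Rightarrow> 'a) \<Rightarrow> 'a \<Rightarrow> bool" where
  "cyclic_vector sc T x \<longleftrightarrow> closure (module.span sc (range (\<lambda>n. (T ^^ n) x))) = UNIV"

text \<open>X^N is modelled as the type 'a^'n ('n a finite type with N elements), with product topology
 and coordinatewise operations.\<close>
definition vec_scale :: "('k \<Rightarrow> 'a \<Rightarrow> 'a) \<Rightarrow> 'k \<Rightarrow> 'a ^ 'n::finite \<Rightarrow> 'a ^ 'n" where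
  "vec_scale sc c v = (\<chi> i. sc c (v $ i))"

definition direct_sum_op :: "('a \<Rightarrow> 'a) \<Rightarrow> 'a ^ 'n::finite \<Rightarrow> 'a ^ 'n" where
  "direct_sum_op T v = (\<chi> i. T (v $ i))"

definition operator_hyp :: "('k::real_normed_field \<Rightarrow> 'a::{ab_group_add,complete_space} \<Rightarrow> 'a) \<Rightarrow> ('a \<Rightarrow> 'a) \<Rightarrow> bool" where
  "operator_hyp sc T \<longleftrightarrow> F_space sc \<and> separable_space TYPE('a) \<and> infinite_dimensional sc (UNIV::'a set)
     \<and> Vector_Spaces.linear sc sc T \<and> continuous_on UNIV T"

definition recurrence_hyp :: "('k::real_normed_field \<Rightarrow> 'a::{ab_group_add,complete_space} \<Rightarrow> 'a) \<Rightarrow> ('a \<Rightarrow> 'a) \<Rightarrow> nat set set \<Rightarrow> bool" where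
  "recurrence_hyp sc T Fam \<longleftrightarrow>
      (\<exists>x. F_recurrent Fam T x \<and> closure (commutant_orbit T x) = UNIV)
    \<or> (\<exists>x. F_recurrent Fam T x \<and> cyclic_vector sc T x)
    \<or> (\<exists>x. F_hypercyclic Fam T x)"

definition subspace_conclusion :: "('k::real_normed_field \<Rightarrow> 'a::{ab_group_add,complete_space} \<Rightarrow> 'a) \<Rightarrow> ('a \<Rightarrow> 'a) \<Rightarrow> nat set set \<Rightarrow> 'n::finite itself \<Rightarrow> bool" where
  "subspace_conclusion sc T Fam _ \<longleftrightarrow>
     (\<exists>V::('a ^ 'n) set. module.subspace (vec_scale sc) V \<and> closure V = UNIV
        \<and> infinite_dimensional (vec_scale sc) V \<and> V \<subseteq> F_Rec Fam (direct_sum_op T))"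

end

theory Submission
  imports Defs
begin

text \<open>
  If S_1, ..., S_N are continuous maps commuting with T, the map y \<mapsto> (S_1 y, ..., S_N y)
  is continuous and intertwines T with T_(N), so it carries the F-recurrent vector x to an
  F-recurrent vector of X^N. Hence every vector of C_T(x)^N is F-recurrent for T_(N).
  For linear T the commutant is closed under sums and scalar multiples, so C_T(x)^N is a subspace,
  and it is dense because C_T(x) is. It is infinite-dimensional because finite-dimensional
  subspaces of a Hausdorff topological vector space are closed, so a dense subset of an
  infinite-dimensional space cannot lie in a finite-dimensional span. Finally C_T(x) contains the
  orbit of x, hence its span, so cyclic and F-hypercyclic vectors have dense C_T(x).
\<close>

locale metric_tvs = vector_space scale
  for scale :: "'k::{real_normed_field,heine_borel} \<Rightarrow> 'a::{ab_group_add,metric_space} \<Rightarrow> 'a" +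
  assumes continuous_on_plus: "continuous_on UNIV (\<lambda>p::'a \<times> 'a. fst p + snd p)"
    and continuous_on_scale: "continuous_on UNIV (\<lambda>p::'k \<times> 'a. scale (fst p) (snd p))"
begin

lemma tendsto_vector_add:
  fixes f g :: "'b \<Rightarrow> 'a"
  assumes "(f \<longlongrightarrow> a) F" "(g \<longlongrightarrow> b) F"
  shows "((\<lambda>t. f t + g t) \<longlongrightarrow> a + b) F"
  using continuous_on_tendsto_compose[OF continuous_on_plus tendsto_Pair[OF assms]] by simp

lemma tendsto_vector_scale:
  assumes "(c \<longlongrightarrow> k) F" "(f \<longlongrightarrow> a) F"
  shows "((\<lambda>t. scale (c t) (f t)) \<longlongrightarrow> scale k a) F"
  using continuous_on_tendsto_compose[OF continuous_on_scale tendsto_Pair[OF assms]] by simp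

lemma tendsto_vector_diff:
  fixes f g :: "'b \<Rightarrow> 'a"
  assumes "(f \<longlongrightarrow> a) F" "(g \<longlongrightarrow> b) F"
  shows "((\<lambda>t. f t - g t) \<longlongrightarrow> a - b) F"
  using tendsto_vector_add[OF assms(1) tendsto_vector_scale[OF tendsto_const assms(2), of "-1"]]
  by simp

lemma continuous_on_vector_add:
  fixes f g :: "'b::topological_space \<Rightarrow> 'a"
  shows "continuous_on UNIV f \<Longrightarrow> continuous_on UNIV g \<Longrightarrow> continuous_on UNIV (\<lambda>x. f x + g x)"
  unfolding continuous_on_def by (auto intro: tendsto_vector_add)

lemma continuous_on_vector_scale:
  fixes f :: "'b::topological_space \<Rightarrow> 'a"
  shows "continuous_on UNIV f \<Longrightarrow> continuous_on UNIV (\<lambda>x. scale c (f x))"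
  unfolding continuous_on_def by (auto intro: tendsto_vector_scale[OF tendsto_const])

end

lemma convergent_subseq_or_norm_at_top:
  fixes c :: "nat \<Rightarrow> 'k::{real_normed_vector,heine_borel}"
  shows "(\<exists>r k. strict_mono r \<and> (c \<circ> r) \<longlonglongrightarrow> k) \<or> filterlim (\<lambda>n. norm (c n)) at_top sequentially"
proof (rule disjCI)
  assume "\<not> filterlim (\<lambda>n. norm (c n)) at_top sequentially"
  then obtain M where "\<exists>\<^sub>F n in sequentially. norm (c n) < M"
    by (auto simp: filterlim_at_top not_eventually not_le)
  then have "infinite {n. norm (c n) < M}"
    by (simp add: frequently_cofinite flip: cofinite_eq_sequentially)
  then obtain s :: "nat \<Rightarrow> nat" where s: "strict_mono s" "\<And>n. norm (c (s n)) < M"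
    using infinite_enumerate by blast
  then have "bounded (range (c \<circ> s))"
    unfolding bounded_iff by (auto intro!: exI[of _ M] less_imp_le)
  then obtain r :: "nat \<Rightarrow> nat" and k where "strict_mono r" "(c \<circ> s \<circ> r) \<longlonglongrightarrow> k"
    using bounded_imp_convergent_subsequence by blast
  then show "\<exists>r k. strict_mono r \<and> (c \<circ> r) \<longlonglongrightarrow> k"
    using strict_mono_o[OF s(1)] by (metis comp_assoc)
qed

context metric_tvs
begin

text \<open>Write y_n = w_n + c_n b with w_n \<in> span B. If (c_n) has a convergent subsequence, the limit
  of y_n lies in span (insert b B); if |c_n| \<rightarrow> \<infinity>, then w_n / c_n \<rightarrow> -b puts b in span B.\<close>
lemma closed_span_insert:
  assumes closed: "closed (span B)"
  shows "closed (span (insert b B))"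
proof (cases "b \<in> span B")
  case True
  then show ?thesis using closed by (simp add: span_redundant)
next
  case b: False
  show ?thesis unfolding closed_sequential_limits
  proof (intro allI impI, elim conjE)
    fix y l assume "\<forall>n. y n \<in> span (insert b B)" and y: "y \<longlonglongrightarrow> l"
    then have "\<forall>n. \<exists>k. y n - scale k b \<in> span B"
      using span_insert by blast
    then obtain c where c: "\<And>n. y n - scale (c n) b \<in> span B"
      by metis
    from convergent_subseq_or_norm_at_top[of c]
    show "l \<in> span (insert b B)"
    proof
      assume "\<exists>r k. strict_mono r \<and> (c \<circ> r) \<longlonglongrightarrow> k"
      then obtain r :: "nat \<Rightarrow> nat" and k where r: "strict_mono r" and k: "(c \<circ> r) \<longlonglongrightarrow> k"
        by blast
      have "(\<lambda>n. y (r n) - scale (c (r n)) b) \<longlonglongrightarrow> l - scale k b"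
        using LIMSEQ_subseq_LIMSEQ[OF y r] k
        by (intro tendsto_vector_diff tendsto_vector_scale tendsto_const) (simp_all add: o_def)
      then have "l - scale k b \<in> span B"
        by (rule closed_sequentially[OF closed c])
      then show ?thesis
        using span_insert by blast
    next
      assume norm_c: "filterlim (\<lambda>n. norm (c n)) at_top sequentially"
      have "(\<lambda>n. inverse (c n)) \<longlonglongrightarrow> 0"
        using filterlim_compose[OF tendsto_inverse_0 filterlim_norm_at_top_imp_at_infinity[OF norm_c]] .
      then have "(\<lambda>n. scale (inverse (c n)) (y n) - b) \<longlonglongrightarrow> scale 0 l - b"
        using y by (intro tendsto_vector_diff tendsto_vector_scale tendsto_const)
      moreover have "eventually (\<lambda>n. scale (inverse (c n)) (y n) - b
          = scale (inverse (c n)) (y n - scale (c n) b)) sequentially"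
      proof -
        have "eventually (\<lambda>n. 0 < norm (c n)) sequentially"
          using norm_c unfolding filterlim_at_top_dense by blast
        then show ?thesis
          by (rule eventually_mono) (simp add: scale_right_diff_distrib)
      qed
      ultimately have "(\<lambda>n. scale (inverse (c n)) (y n - scale (c n) b)) \<longlonglongrightarrow> - b"
        by (simp add: tendsto_cong)
      then have "- b \<in> span B"
        by (rule closed_sequentially[OF closed span_scale[OF c]])
      with b show ?thesis
        using span_neg by fastforce
    qed
  qed
qed

lemma closed_span_finite: "finite B \<Longrightarrow> closed (span B)"
  by (induction B rule: finite_induct) (simp_all add: closed_span_insert)

lemma infinite_dimensional_dense:
  assumes "infinite_dimensional scale UNIV" and dense: "closure C = UNIV"
  shows "infinite_dimensional scale C"
proof -
  obtain B where B: "B \<subseteq> C" "independent B" "C \<subseteq> span B"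
    using maximal_independent_subset by blast
  have "infinite B"
  proof
    assume "finite B"
    then have "closure C \<subseteq> span B"
      using B(3) closed_span_finite closure_minimal by blast
    then have "span B = UNIV"
      using dense by blast
    moreover obtain B' where "infinite B'" "independent B'"
      using assms(1) unfolding infinite_dimensional_def by blast
    ultimately show False
      using independent_span_bound[OF \<open>finite B\<close>, of B'] by simp
  qed
  then show ?thesis
    unfolding infinite_dimensional_def using B by blast
qed

end

lemma vector_space_vec_scale:
  assumes "vector_space sc"
  shows "vector_space (vec_scale sc :: 'k::field \<Rightarrow> 'a::ab_group_add ^ 'n::finite \<Rightarrow> 'a ^ 'n)"
proof -
  interpret vector_space sc by fact
  show ?thesis
    by unfold_locales (simp_all add: vec_eq_iff vec_scale_def scale_right_distrib scale_left_distrib)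
qed

lemma subspace_vec_components:
  fixes sc :: "'k::field \<Rightarrow> 'a::ab_group_add \<Rightarrow> 'a"
  assumes "vector_space sc" and "module.subspace sc C"
  shows "module.subspace (vec_scale sc) {v :: 'a ^ 'n::finite. \<forall>i. v $ i \<in> C}"
  using assms
  unfolding module.subspace_def[OF assms(1)[folded module_iff_vector_space]]
    module.subspace_def[OF vector_space_vec_scale[OF assms(1), folded module_iff_vector_space]]
  by (simp add: vec_scale_def)

lemma infinite_dimensional_vec_components:
  fixes sc :: "'k::field \<Rightarrow> 'a::ab_group_add \<Rightarrow> 'a"
  assumes vs: "vector_space sc" and "infinite_dimensional sc C"
  shows "infinite_dimensional (vec_scale sc) {v :: 'a ^ 'n::finite. \<forall>i. v $ i \<in> C}"
proof -
  obtain B where B: "B \<subseteq> C" "infinite B" "\<not> module.dependent sc B"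
    using assms(2) unfolding infinite_dimensional_def by blast
  define diag :: "'a \<Rightarrow> 'a ^ 'n" where "diag b = (\<chi> i. b)" for b
  have hom: "module_hom sc (vec_scale sc) diag"
    using vs vector_space_vec_scale[OF vs] unfolding module_hom_iff module_iff_vector_space
    by (simp add: diag_def vec_scale_def vec_eq_iff)
  moreover have inj: "inj diag"
    by (rule injI) (metis diag_def vec_lambda_beta)
  ultimately have "\<not> module.dependent (vec_scale sc) (diag ` B)"
    using B(3) by (simp add: module_hom.independent_inj_image)
  moreover have "infinite (diag ` B)"
    using B(2) finite_imageD inj inj_on_subset by blast
  moreover have "diag ` B \<subseteq> {v. \<forall>i. v $ i \<in> C}"
    using B(1) by (auto simp: diag_def)
  ultimately show ?thesis
    unfolding infinite_dimensional_def by blast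
qed

lemma closure_vec_components:
  fixes C :: "'a::metric_space set"
  assumes "closure C = UNIV"
  shows "closure {v :: 'a ^ 'n::finite. \<forall>i. v $ i \<in> C} = UNIV"
proof (intro set_eqI iffI UNIV_I)
  fix v :: "'a ^ 'n"
  have "\<forall>i. \<exists>s. (\<forall>n. s n \<in> C) \<and> s \<longlonglongrightarrow> v $ i"
    using assms closure_sequential by blast
  then obtain s where s: "\<And>i n. s i n \<in> C" "\<And>i. s i \<longlonglongrightarrow> v $ i"
    by metis
  have "(\<lambda>n. \<chi> i. s i n) \<longlonglongrightarrow> (\<chi> i. v $ i)"
    using s(2) by (rule tendsto_vec_lambda)
  then have "(\<lambda>n. \<chi> i. s i n) \<longlonglongrightarrow> v"
    by (simp only: vec_lambda_eta)
  moreover have "\<forall>n. (\<chi> i. s i n) \<in> {v. \<forall>i. v $ i \<in> C}"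
    using s(1) by simp
  ultimately show "v \<in> closure {v. \<forall>i. v $ i \<in> C}"
    unfolding closure_sequential by (intro exI[of _ "\<lambda>n. \<chi> i. s i n"] conjI)
qed

lemma F_recurrent_semiconjugate:
  assumes rec: "F_recurrent Fam T x" and cont: "continuous_on UNIV \<Phi>"
    and semiconj: "\<And>y. \<Phi> (T y) = R (\<Phi> y)"
  shows "F_recurrent Fam R (\<Phi> x)"
  unfolding F_recurrent_def
proof (intro allI impI, elim conjE)
  fix U assume "open U" "\<Phi> x \<in> U"
  moreover have "open (\<Phi> -` U)"
    using cont \<open>open U\<close> by (simp add: continuous_on_open_vimage)
  ultimately have "{n. (T ^^ n) x \<in> \<Phi> -` U} \<in> Fam"
    using rec unfolding F_recurrent_def by blast
  moreover have "(R ^^ n) (\<Phi> x) = \<Phi> ((T ^^ n) x)" for n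
    by (induction n) (simp_all add: semiconj)
  ultimately show "{n. (R ^^ n) (\<Phi> x) \<in> U} \<in> Fam"
    by simp
qed

lemma F_recurrent_direct_sum_commutant_orbit:
  fixes v :: "'a::topological_space ^ 'n::finite"
  assumes rec: "F_recurrent Fam T x" and v: "\<And>i. v $ i \<in> commutant_orbit T x"
  shows "F_recurrent Fam (direct_sum_op T) v"
proof -
  have "\<forall>i. \<exists>S. S \<in> commutant T \<and> v $ i = S x"
    using v unfolding commutant_orbit_def by blast
  then obtain S where S: "\<And>i. S i \<in> commutant T" "\<And>i. v $ i = S i x"
    by metis
  define \<Phi> where "\<Phi> y = (\<chi> i. S i y)" for y
  have "continuous_on UNIV \<Phi>"
    unfolding \<Phi>_def using S(1) by (intro continuous_on_vec_lambda) (simp add: commutant_def)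
  moreover have "\<Phi> (T y) = direct_sum_op T (\<Phi> y)" for y
    using S(1) by (simp add: \<Phi>_def direct_sum_op_def commutant_def fun_eq_iff)
  ultimately have "F_recurrent Fam (direct_sum_op T) (\<Phi> x)"
    using F_recurrent_semiconjugate[OF rec] by blast
  moreover have "\<Phi> x = v"
    using S(2) by (simp add: \<Phi>_def vec_eq_iff)
  ultimately show ?thesis
    by simp
qed

lemma funpow_in_commutant:
  assumes "continuous_on UNIV T"
  shows "T ^^ n \<in> commutant T"
proof -
  have "continuous_on UNIV (T ^^ n)"
    by (induction n) (auto intro: continuous_on_compose2[OF assms])
  then show ?thesis
    unfolding commutant_def by (simp add: funpow_swap1 fun_eq_iff)
qed

lemma orbit_subset_commutant_orbit:
  "continuous_on UNIV T \<Longrightarrow> range (\<lambda>n. (T ^^ n) x) \<subseteq> commutant_orbit T x"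
  unfolding commutant_orbit_def using funpow_in_commutant by blast

lemma F_hypercyclic_imp_F_recurrent: "F_hypercyclic Fam T x \<Longrightarrow> F_recurrent Fam T x"
  unfolding F_hypercyclic_def F_recurrent_def by blast

lemma dense_orbit_if_F_hypercyclic:
  assumes "{} \<notin> Fam" and "F_hypercyclic Fam T x"
  shows "closure (range (\<lambda>n. (T ^^ n) x)) = UNIV"
proof (rule ccontr)
  let ?U = "- closure (range (\<lambda>n. (T ^^ n) x))"
  assume "closure (range (\<lambda>n. (T ^^ n) x)) \<noteq> UNIV"
  then have "open ?U" "?U \<noteq> {}"
    by auto
  then have "{n. (T ^^ n) x \<in> ?U} \<in> Fam"
    using assms(2) unfolding F_hypercyclic_def by blast
  moreover have "{n. (T ^^ n) x \<in> ?U} = {}"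
    using closure_subset[of "range (\<lambda>n. (T ^^ n) x)"] by blast
  ultimately show False
    using assms(1) by simp
qed

context metric_tvs
begin

lemma subspace_commutant_orbit:
  assumes "Vector_Spaces.linear scale scale T"
  shows "subspace (commutant_orbit T x)"
proof -
  interpret T: Vector_Spaces.linear scale scale T by fact
  show ?thesis
    unfolding subspace_def
  proof (intro conjI ballI allI)
    show "0 \<in> commutant_orbit T x"
      unfolding commutant_orbit_def
      by (rule CollectI, rule exI[of _ "\<lambda>_. 0"]) (simp add: commutant_def fun_eq_iff)
  next
    fix a b assume "a \<in> commutant_orbit T x" "b \<in> commutant_orbit T x"
    then obtain S S' where "a = S x" "b = S' x" "S \<in> commutant T" "S' \<in> commutant T"
      unfolding commutant_orbit_def by blast
    moreover have "(\<lambda>y. S y + S' y) \<in> commutant T"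
      using calculation by (simp add: commutant_def continuous_on_vector_add fun_eq_iff T.add)
    ultimately show "a + b \<in> commutant_orbit T x"
      unfolding commutant_orbit_def by (auto intro!: exI[of _ "\<lambda>y. S y + S' y"])
  next
    fix c a assume "a \<in> commutant_orbit T x"
    then obtain S where "a = S x" "S \<in> commutant T"
      unfolding commutant_orbit_def by blast
    moreover have "(\<lambda>y. scale c (S y)) \<in> commutant T"
      using calculation by (simp add: commutant_def continuous_on_vector_scale fun_eq_iff T.scale)
    ultimately show "scale c a \<in> commutant_orbit T x"
      unfolding commutant_orbit_def by (auto intro!: exI[of _ "\<lambda>y. scale c (S y)"])
  qed
qed

lemma dense_commutant_orbit_if_cyclic:
  assumes "Vector_Spaces.linear scale scale T" "continuous_on UNIV T" "cyclic_vector scale T x"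
  shows "closure (commutant_orbit T x) = UNIV"
proof -
  have "span (range (\<lambda>n. (T ^^ n) x)) \<subseteq> commutant_orbit T x"
    using orbit_subset_commutant_orbit[OF assms(2)] subspace_commutant_orbit[OF assms(1)]
    by (rule span_minimal)
  then show ?thesis
    using closure_mono assms(3) unfolding cyclic_vector_def by blast
qed

theorem dense_infinite_dimensional_subspace_of_recurrent_vectors:
  assumes "infinite_dimensional scale UNIV" "Vector_Spaces.linear scale scale T"
    and "F_recurrent Fam T x" "closure (commutant_orbit T x) = UNIV"
  shows "\<exists>V :: ('a ^ 'n::finite) set. module.subspace (vec_scale scale) V \<and> closure V = UNIV
    \<and> infinite_dimensional (vec_scale scale) V \<and> V \<subseteq> F_Rec Fam (direct_sum_op T)"
proof (intro exI conjI)
  let ?V = "{v :: 'a ^ 'n. \<forall>i. v $ i \<in> commutant_orbit T x}"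
  show "module.subspace (vec_scale scale) ?V"
    using subspace_vec_components vector_space_axioms subspace_commutant_orbit[OF assms(2)] by blast
  show "closure ?V = UNIV"
    using closure_vec_components assms(4) by blast
  show "infinite_dimensional (vec_scale scale) ?V"
    using infinite_dimensional_vec_components vector_space_axioms
      infinite_dimensional_dense[OF assms(1,4)] by blast
  show "?V \<subseteq> F_Rec Fam (direct_sum_op T)"
    using F_recurrent_direct_sum_commutant_orbit[OF assms(3)] unfolding F_Rec_def by blast
qed

end

lemma F_space_imp_metric_tvs:
  fixes sc :: "'k::{real_normed_field,heine_borel} \<Rightarrow> 'a::{ab_group_add,complete_space} \<Rightarrow> 'a"
  shows "F_space sc \<Longrightarrow> metric_tvs sc"
  unfolding F_space_def metric_tvs_def metric_tvs_axioms_def by blast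

lemma recurrence_hyp_imp_dense_commutant_orbit:
  fixes sc :: "'k::{real_normed_field,heine_borel} \<Rightarrow> 'a::{ab_group_add,complete_space} \<Rightarrow> 'a"
  assumes "metric_tvs sc" "Vector_Spaces.linear sc sc T" "continuous_on UNIV T"
    and "furstenberg_family Fam" "recurrence_hyp sc T Fam"
  obtains x where "F_recurrent Fam T x" "closure (commutant_orbit T x) = UNIV"
proof -
  have "{} \<notin> Fam"
    using assms(4) unfolding furstenberg_family_def by blast
  then have "F_recurrent Fam T x \<and> closure (commutant_orbit T x) = UNIV" if "F_hypercyclic Fam T x" for x
    using that F_hypercyclic_imp_F_recurrent dense_orbit_if_F_hypercyclic
      closure_mono[OF orbit_subset_commutant_orbit[OF assms(3)]] by blast
  then show ?thesis
    using that assms(5) metric_tvs.dense_commutant_orbit_if_cyclic[OF assms(1-3)]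
    unfolding recurrence_hyp_def by blast
qed

lemma subspace_conclusion_if_operator_hyp:
  fixes sc :: "'k::{real_normed_field,heine_borel} \<Rightarrow> 'a::{ab_group_add,complete_space} \<Rightarrow> 'a"
  assumes "operator_hyp sc T" "furstenberg_family Fam" "recurrence_hyp sc T Fam"
  shows "subspace_conclusion sc T Fam TYPE('n::finite)"
proof -
  have tvs: "metric_tvs sc" and inf: "infinite_dimensional sc UNIV"
    and lin: "Vector_Spaces.linear sc sc T" and cont: "continuous_on UNIV T"
    using assms(1) F_space_imp_metric_tvs unfolding operator_hyp_def by blast+
  obtain x where "F_recurrent Fam T x" "closure (commutant_orbit T x) = UNIV"
    using recurrence_hyp_imp_dense_commutant_orbit[OF tvs lin cont assms(2,3)] .
  then show ?thesis
    unfolding subspace_conclusion_def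
    using metric_tvs.dense_infinite_dimensional_subspace_of_recurrent_vectors[OF tvs inf lin] by blast
qed

theorem mainTheorem17:
  shows "(\<forall>(sc :: real \<Rightarrow> 'a::{ab_group_add,complete_space} \<Rightarrow> 'a) T Fam.
            operator_hyp sc T \<and> furstenberg_family Fam \<and> recurrence_hyp sc T Fam
            \<longrightarrow> subspace_conclusion sc T Fam TYPE('n::finite))
       \<and> (\<forall>(sc :: complex \<Rightarrow> 'b::{ab_group_add,complete_space} \<Rightarrow> 'b) T Fam.
            operator_hyp sc T \<and> furstenberg_family Fam \<and> recurrence_hyp sc T Fam
            \<longrightarrow> subspace_conclusion sc T Fam TYPE('n::finite))"
  using subspace_conclusion_if_operator_hyp[where 'k = real and 'a = 'a]
    subspace_conclusion_if_operator_hyp[where 'k = complex and 'a = 'b] by blast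

end
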